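(* A morphism $m:A\to Z$ of $\mathbf{iRel}$ is a monomorphism in $\mathbf{iRel}$ if and only if it is total, i.e. $m(a)\neq\emptyset$ for every $a\in A$.
   Context: A binary relation $R:A\to Z$ (i.e. $R\subseteq A\times Z$; write $aRz$ for $\langle a,z\rangle\in R$) is injective if $aRz$ and $a'Rz$ imply $a=a'$. $\mathbf{iRel}$ is the category of sets and injective relations, with relational composition. For $a\in A$, $m(a)=\{z\in Z: amz\}$. *)

theory Defs
  imports Main
begin

definition inj_rel :: "('a \<times> 'z) set \<Rightarrow> bool" where
  "inj_rel R \<longleftrightarrow> (\<forall>a a' z. (a, z) \<in> R \<longrightarrow> (a', z) \<in> R \<longrightarrow> a = a')"

definition irel_hom :: "'a set \<Rightarrow> 'z set \<Rightarrow> ('a \<times> 'z) set \<Rightarrow> bool" where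
  "irel_hom A Z R \<longleftrightarrow> R \<subseteq> A \<times> Z \<and> inj_rel R"

text \<open>Composition in iRel: the composite m after f is the relational composite f O m.
  A morphism m : A -> Z is a monomorphism if for every object X (a set, here ranging
  over subsets of an arbitrary type 'x) and all morphisms f, g : X -> A,
  (m after f) = (m after g) implies f = g.\<close>
definition irel_mono :: "'x itself \<Rightarrow> 'a set \<Rightarrow> 'z set \<Rightarrow> ('a \<times> 'z) set \<Rightarrow> bool" where
  "irel_mono _ A Z m \<longleftrightarrow> irel_hom A Z m \<and>
     (\<forall>(X :: 'x set) f g. irel_hom X A f \<longrightarrow> irel_hom X A g \<longrightarrow> f O m = g O m \<longrightarrow> f = g)"

end

theory Submission
  imports Defs
begin

(* Totality suffices: if (x,a) is in f and a is related by m to some z,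
   then (x,z) is in f O m = g O m, so g relates x to some a' with (a',z) in m,
   and injectivity of m forces a' = a; hence f is contained in g, and by
   symmetry f = g (lemma total_injective_cancel).
   Totality is necessary: if a in A has m(a) empty, the one-point relation
   {(x,a)} and the empty relation are distinct morphisms {x} -> A with the
   same (empty) composite with m (lemmas non_total_composite_empty,
   point_irel_hom, empty_irel_hom). *)

lemma total_injective_cancel:
  assumes inj: "inj_rel m"
    and total: "\<forall>a \<in> A. {z. (a, z) \<in> m} \<noteq> {}"
    and f_range: "f \<subseteq> X \<times> A"
    and comp_eq: "f O m = g O m"
  shows "f \<subseteq> g"
proof (rule subrelI)
  fix x a assume xa: "(x, a) \<in> f"
  with f_range have "a \<in> A" by auto
  with total obtain z where az: "(a, z) \<in> m" by auto
  with xa have "(x, z) \<in> g O m" using comp_eq by auto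
  then obtain a' where xa': "(x, a') \<in> g" and a'z: "(a', z) \<in> m" by auto
  from inj az a'z have "a' = a" unfolding inj_rel_def by blast
  with xa' show "(x, a) \<in> g" by simp
qed

lemma non_total_composite_empty:
  assumes "{z. (a, z) \<in> m} = {}"
  shows "{(x, a)} O m = {}"
  using assms by auto

lemma point_irel_hom:
  assumes "a \<in> A"
  shows "irel_hom {x} A {(x, a)}"
  using assms unfolding irel_hom_def inj_rel_def by auto

lemma empty_irel_hom: "irel_hom X A {}"
  unfolding irel_hom_def inj_rel_def by auto

theorem mainTheorem2:
  fixes A :: "'a set" and Z :: "'z set" and m :: "('a \<times> 'z) set"
  assumes "irel_hom A Z m"
  shows "irel_mono TYPE('x) A Z m \<longleftrightarrow> (\<forall>a \<in> A. {z. (a, z) \<in> m} \<noteq> {})"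
proof
  assume mono: "irel_mono TYPE('x) A Z m"
  show "\<forall>a \<in> A. {z. (a, z) \<in> m} \<noteq> {}"
  proof (rule ccontr)
    assume "\<not> ?thesis"
    then obtain a where a: "a \<in> A" "{z. (a, z) \<in> m} = {}" by auto
    fix x :: 'x
    have "{(x, a)} O m = ({} :: ('x \<times> 'a) set) O m"
      using non_total_composite_empty[OF a(2)] by simp
    moreover have "\<forall>f g. irel_hom {x} A f \<longrightarrow> irel_hom {x} A g \<longrightarrow> f O m = g O m \<longrightarrow> f = g"
      using mono unfolding irel_mono_def by blast
    ultimately have "{(x, a)} = ({} :: ('x \<times> 'a) set)"
      using point_irel_hom[OF a(1), of x] empty_irel_hom[of "{x}" A] by blast
    then show False by simp
  qed
next
  assume total: "\<forall>a \<in> A. {z. (a, z) \<in> m} \<noteq> {}"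
  have inj: "inj_rel m" using assms unfolding irel_hom_def by simp
  show "irel_mono TYPE('x) A Z m"
    unfolding irel_mono_def
  proof (intro conjI allI impI)
    fix X :: "'x set" and f g
    assume "irel_hom X A f" "irel_hom X A g" and comp_eq: "f O m = g O m"
    then have "f \<subseteq> X \<times> A" "g \<subseteq> X \<times> A" unfolding irel_hom_def by auto
    then show "f = g"
      using total_injective_cancel[OF inj total _ comp_eq]
        total_injective_cancel[OF inj total _ comp_eq[symmetric]]
      by (simp add: subset_antisym)
  qed (fact assms)
qed

end
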